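(* Let $\psi:[0,\infty]\to[0,\infty]$ be a sense-reversing homeomorphism and $\varphi:[0,\infty]\to[0,\infty]$ a monotone function. Then $$[\psi\circ\varphi]^{-1}(\tau)=\varphi^{-1}\circ\psi^{-1}(\tau)\quad\forall\tau\in[0,\infty],$$ $$[\varphi\circ\psi]^{-1}(\tau)\le\psi^{-1}\circ\varphi^{-1}(\tau)\quad\forall\tau\in[0,\infty],$$ and, except for a countable collection of $\tau\in[0,\infty]$, $[\varphi\circ\psi]^{-1}(\tau)=\psi^{-1}\circ\varphi^{-1}(\tau)$. The last equality holds for all $\tau\in[0,\infty]$ if and only if $\varphi$ is strictly monotone.
   Context: Inverse functions of monotone functions are defined as follows: for a non-decreasing $\Phi:[0,\infty]\to[0,\infty]$, $\Phi^{-1}(\tau)=\inf\{t\in[0,\infty]:\Phi(t)\ge\tau\}$; for a non-increasing $\varphi:[0,\infty]\to[0,\infty]$, $\varphi^{-1}(\tau)=\inf\{t\in[0,\infty]:\varphi(t)\le\tau\}$; in both cases $\inf\emptyset=\infty$. *)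

theory Defs
  imports "HOL-Analysis.Analysis" "HOL-Library.Extended_Nonnegative_Real"
begin

text \<open>[0,\<infinity>] is modelled by the type ennreal; Inf of the empty set is top = \<infinity>.\<close>

definition inv_incr :: "(ennreal \<Rightarrow> ennreal) \<Rightarrow> ennreal \<Rightarrow> ennreal" where
  "inv_incr F \<tau> = Inf {t. F t \<ge> \<tau>}"

definition inv_decr :: "(ennreal \<Rightarrow> ennreal) \<Rightarrow> ennreal \<Rightarrow> ennreal" where
  "inv_decr f \<tau> = Inf {t. f t \<le> \<tau>}"

text \<open>Generalised inverse of a monotone function; the flag says whether the
  function is regarded as non-decreasing (True) or non-increasing (False).\<close>
definition mono_inv :: "bool \<Rightarrow> (ennreal \<Rightarrow> ennreal) \<Rightarrow> ennreal \<Rightarrow> ennreal" where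
  "mono_inv up f = (if up then inv_incr f else inv_decr f)"

definition sense_reversing_homeo :: "(ennreal \<Rightarrow> ennreal) \<Rightarrow> bool" where
  "sense_reversing_homeo \<psi> \<longleftrightarrow> (\<exists>g. homeomorphism UNIV UNIV \<psi> g) \<and> antimono \<psi>"

definition strictly_monotone :: "(ennreal \<Rightarrow> ennreal) \<Rightarrow> bool" where
  "strictly_monotone f \<longleftrightarrow> strict_mono f \<or> (\<forall>x y. x < y \<longrightarrow> f y < f x)"

end

theory Submission
  imports Defs
begin

text \<open>Write \<open>g\<close> for the inverse of \<psi>, which is \<open>inv_decr \<psi>\<close>. Pulling back along the
  order-reversing bijection \<psi> turns infima of preimages into \<open>g\<close> of suprema, so that
  \<open>[\<psi> \<circ> \<phi>]\<^sup>-\<^sup>1 = \<phi>\<^sup>-\<^sup>1 \<circ> g\<close> exactly, while \<open>[\<phi> \<circ> \<psi>]\<^sup>-\<^sup>1(\<tau>)\<close> and \<open>g (\<phi>\<^sup>-\<^sup>1 \<tau>)\<close> are \<open>g\<close>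
  of the supremum of the sublevel set and of the infimum of the superlevel set of \<phi> at \<tau>
  (levels measured in the order in which \<phi> is monotone). The two sets cover [0,\<infinity>], so
  that infimum is at most that supremum, with strict inequality exactly when some point of
  the superlevel set lies below some point of the sublevel set, i.e. when \<phi> takes the
  value \<tau> on a nondegenerate interval. Such plateaus contain distinct rationals, so there
  are countably many of them, and there are none iff \<phi> is injective.\<close>

lemma Inf_le_Sup_if_cover:
  fixes A B :: "'a::{complete_linorder, dense_linorder} set"
  assumes "\<And>x. x \<in> A \<or> x \<in> B"
  shows "Inf A \<le> Sup B"
proof (rule dense_le)
  fix x assume "x < Inf A"
  then have "x \<notin> A" using Inf_lower not_le by blast
  then show "x \<le> Sup B" using assms Sup_upper by blast
qed

lemma Inf_less_Sup_iff:
  fixes A B :: "'a::{complete_linorder, dense_linorder} set"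
  shows "Inf A < Sup B \<longleftrightarrow> (\<exists>a\<in>A. \<exists>b\<in>B. a < b)"
proof
  assume "Inf A < Sup B"
  then obtain c where "Inf A < c" "c < Sup B" using dense by blast
  then show "\<exists>a\<in>A. \<exists>b\<in>B. a < b" by (auto simp: Inf_less_iff less_Sup_iff intro: less_trans)
next
  assume "\<exists>a\<in>A. \<exists>b\<in>B. a < b"
  then show "Inf A < Sup B" by (meson Inf_lower Sup_upper le_less_trans less_le_trans)
qed

lemma sense_reversing_homeo_le_iff:
  assumes "sense_reversing_homeo \<psi>"
  shows "\<psi> s \<le> \<psi> t \<longleftrightarrow> t \<le> s"
proof -
  obtain g where inv: "\<And>x. g (\<psi> x) = x" and anti: "antimono \<psi>"
    using assms unfolding sense_reversing_homeo_def homeomorphism_def by auto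
  show ?thesis
  proof
    assume "\<psi> s \<le> \<psi> t"
    show "t \<le> s"
    proof (rule ccontr)
      assume "\<not> t \<le> s"
      then have "\<psi> t \<le> \<psi> s" using anti by (simp add: antimono_def)
      with \<open>\<psi> s \<le> \<psi> t\<close> have "s = t" using inv by (metis order_antisym)
      with \<open>\<not> t \<le> s\<close> show False by simp
    qed
  qed (use anti in \<open>simp add: antimono_def\<close>)
qed

lemma sense_reversing_homeo_surj:
  "sense_reversing_homeo \<psi> \<Longrightarrow> surj \<psi>"
  unfolding sense_reversing_homeo_def homeomorphism_def by (metis UNIV_I image_eqI surjI)

lemma inv_decr_sense_reversing_homeo_apply:
  assumes "sense_reversing_homeo \<psi>"
  shows "inv_decr \<psi> (\<psi> t) = t"
  unfolding inv_decr_def sense_reversing_homeo_le_iff[OF assms]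
  by (metis Inf_atLeast atLeast_def)

lemma sense_reversing_homeo_apply_inv_decr:
  assumes "sense_reversing_homeo \<psi>"
  shows "\<psi> (inv_decr \<psi> \<tau>) = \<tau>"
  using sense_reversing_homeo_surj[OF assms] inv_decr_sense_reversing_homeo_apply[OF assms]
  by (metis surjD)

lemma sense_reversing_homeo_le_iff_inv_decr:
  assumes "sense_reversing_homeo \<psi>"
  shows "\<psi> s \<le> \<tau> \<longleftrightarrow> inv_decr \<psi> \<tau> \<le> s"
  by (metis assms sense_reversing_homeo_apply_inv_decr sense_reversing_homeo_le_iff)

lemma sense_reversing_homeo_ge_iff_inv_decr:
  assumes "sense_reversing_homeo \<psi>"
  shows "\<tau> \<le> \<psi> s \<longleftrightarrow> s \<le> inv_decr \<psi> \<tau>"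
  by (metis assms sense_reversing_homeo_apply_inv_decr sense_reversing_homeo_le_iff)

lemma antimono_inv_decr_sense_reversing_homeo:
  assumes "sense_reversing_homeo \<psi>"
  shows "antimono (inv_decr \<psi>)"
proof (rule antimonoI)
  fix a b :: ennreal assume "a \<le> b"
  then have "\<psi> (inv_decr \<psi> a) \<le> \<psi> (inv_decr \<psi> b)"
    by (simp add: sense_reversing_homeo_apply_inv_decr[OF assms])
  then show "inv_decr \<psi> b \<le> inv_decr \<psi> a"
    by (simp add: sense_reversing_homeo_le_iff[OF assms])
qed

lemma inj_inv_decr_sense_reversing_homeo:
  "sense_reversing_homeo \<psi> \<Longrightarrow> inj (inv_decr \<psi>)"
  by (metis injI sense_reversing_homeo_apply_inv_decr)

lemma Inf_preimage_sense_reversing_homeo: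
  assumes "sense_reversing_homeo \<psi>"
  shows "Inf {t. \<psi> t \<in> S} = inv_decr \<psi> (Sup S)"
proof (rule antisym)
  have "Sup S \<le> \<psi> (Inf {t. \<psi> t \<in> S})"
  proof (rule Sup_least)
    fix x assume "x \<in> S"
    then have "Inf {t. \<psi> t \<in> S} \<le> inv_decr \<psi> x"
      by (simp add: Inf_lower sense_reversing_homeo_apply_inv_decr[OF assms])
    then show "x \<le> \<psi> (Inf {t. \<psi> t \<in> S})"
      using sense_reversing_homeo_ge_iff_inv_decr[OF assms] by blast
  qed
  then show "Inf {t. \<psi> t \<in> S} \<le> inv_decr \<psi> (Sup S)"
    using sense_reversing_homeo_ge_iff_inv_decr[OF assms] by blast
next
  show "inv_decr \<psi> (Sup S) \<le> Inf {t. \<psi> t \<in> S}"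
    by (rule Inf_greatest)
      (simp add: Sup_upper sense_reversing_homeo_le_iff_inv_decr[OF assms, symmetric])
qed

definition dir_le :: "bool \<Rightarrow> 'a::order \<Rightarrow> 'a \<Rightarrow> bool" where
  "dir_le up x y \<longleftrightarrow> (if up then x \<le> y else y \<le> x)"

lemma dir_le_Not: "dir_le (\<not> up) x y \<longleftrightarrow> dir_le up y x"
  by (simp add: dir_le_def)

lemma monotone_dir_le_iff: "monotone (\<le>) (dir_le up) f \<longleftrightarrow> (if up then mono f else antimono f)"
  by (simp add: dir_le_def monotone_def mono_def antimono_def)

lemma mono_inv_False: "mono_inv False f = inv_decr f"
  by (simp add: mono_inv_def)

lemma mono_inv_eq_Inf_dir_le: "mono_inv up f \<tau> = Inf {t. dir_le up \<tau> (f t)}"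
  by (simp add: mono_inv_def inv_incr_def inv_decr_def dir_le_def)

lemma dir_le_sense_reversing_homeo_iff:
  assumes "sense_reversing_homeo \<psi>"
  shows "dir_le up (\<psi> s) \<tau> \<longleftrightarrow> dir_le up (inv_decr \<psi> \<tau>) s"
  by (simp add: dir_le_def sense_reversing_homeo_le_iff_inv_decr[OF assms]
      sense_reversing_homeo_ge_iff_inv_decr[OF assms])

lemma mono_inv_sense_reversing_homeo_comp:
  assumes "sense_reversing_homeo \<psi>"
  shows "mono_inv (\<not> up) (\<psi> \<circ> \<phi>) \<tau> = mono_inv up \<phi> (mono_inv False \<psi> \<tau>)"
  unfolding mono_inv_False
  by (simp add: mono_inv_eq_Inf_dir_le dir_le_Not dir_le_sense_reversing_homeo_iff[OF assms])

lemma mono_inv_comp_sense_reversing_homeo_eq: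
  assumes "sense_reversing_homeo \<psi>"
  shows "mono_inv (\<not> up) (\<phi> \<circ> \<psi>) \<tau> = inv_decr \<psi> (Sup {s. dir_le up (\<phi> s) \<tau>})"
    and "mono_inv False \<psi> (mono_inv up \<phi> \<tau>) = inv_decr \<psi> (Inf {s. dir_le up \<tau> (\<phi> s)})"
  unfolding mono_inv_False
  by (simp_all add: mono_inv_eq_Inf_dir_le dir_le_Not
      Inf_preimage_sense_reversing_homeo[OF assms, symmetric])

lemma mono_inv_comp_sense_reversing_homeo_le:
  assumes "sense_reversing_homeo \<psi>"
  shows "mono_inv (\<not> up) (\<phi> \<circ> \<psi>) \<tau> \<le> mono_inv False \<psi> (mono_inv up \<phi> \<tau>)"
proof -
  have "Inf {s. dir_le up \<tau> (\<phi> s)} \<le> Sup {s. dir_le up (\<phi> s) \<tau>}"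
    by (rule Inf_le_Sup_if_cover) (auto simp: dir_le_def)
  then show ?thesis
    using antimono_inv_decr_sense_reversing_homeo[OF assms]
    by (simp add: mono_inv_comp_sense_reversing_homeo_eq[OF assms] antimonoD)
qed

lemma mono_inv_comp_sense_reversing_homeo_eq_iff:
  assumes "sense_reversing_homeo \<psi>"
  shows "mono_inv (\<not> up) (\<phi> \<circ> \<psi>) \<tau> = mono_inv False \<psi> (mono_inv up \<phi> \<tau>)
    \<longleftrightarrow> \<not> (\<exists>u l. u < l \<and> dir_le up \<tau> (\<phi> u) \<and> dir_le up (\<phi> l) \<tau>)"
proof -
  have "Inf {s. dir_le up \<tau> (\<phi> s)} \<le> Sup {s. dir_le up (\<phi> s) \<tau>}"
    by (rule Inf_le_Sup_if_cover) (auto simp: dir_le_def)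
  then have "Sup {s. dir_le up (\<phi> s) \<tau>} = Inf {s. dir_le up \<tau> (\<phi> s)}
      \<longleftrightarrow> \<not> Inf {s. dir_le up \<tau> (\<phi> s)} < Sup {s. dir_le up (\<phi> s) \<tau>}"
    by auto
  then show ?thesis
    using inj_inv_decr_sense_reversing_homeo[OF assms]
    by (auto simp: mono_inv_comp_sense_reversing_homeo_eq[OF assms] inj_eq Inf_less_Sup_iff)
qed

definition plateau_values :: "('a::order \<Rightarrow> 'b) \<Rightarrow> 'b set" where
  "plateau_values f = {\<tau>. \<exists>u l. u < l \<and> f u = \<tau> \<and> f l = \<tau>}"

lemma monotone_dir_le_gap_iff_plateau:
  assumes "monotone (\<le>) (dir_le up) f"
  shows "(\<exists>u l. u < l \<and> dir_le up \<tau> (f u) \<and> dir_le up (f l) \<tau>) \<longleftrightarrow> \<tau> \<in> plateau_values f"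
proof
  assume "\<exists>u l. u < l \<and> dir_le up \<tau> (f u) \<and> dir_le up (f l) \<tau>"
  then obtain u l where ul: "u < l" "dir_le up \<tau> (f u)" "dir_le up (f l) \<tau>" by blast
  moreover have "dir_le up (f u) (f l)"
    using assms \<open>u < l\<close> by (simp add: monotone_def)
  ultimately have "f u = \<tau> \<and> f l = \<tau>"
    by (cases up) (simp_all add: dir_le_def, (meson order_antisym order_trans)+)
  with \<open>u < l\<close> show "\<tau> \<in> plateau_values f" by (auto simp: plateau_values_def)
next
  assume "\<tau> \<in> plateau_values f"
  then obtain u l where "u < l" "f u = \<tau>" "f l = \<tau>" by (auto simp: plateau_values_def)
  then show "\<exists>u l. u < l \<and> dir_le up \<tau> (f u) \<and> dir_le up (f l) \<tau>"
    by (metis dir_le_def order_refl)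
qed

lemma countable_plateau_values:
  fixes f :: "ennreal \<Rightarrow> 'a::order"
  assumes "monotone (\<le>) (dir_le up) f"
  shows "countable (plateau_values f)"
proof (rule countable_subset)
  show "plateau_values f \<subseteq> f ` range (\<lambda>r. ennreal (real_of_rat r))"
  proof
    fix \<tau> assume "\<tau> \<in> plateau_values f"
    then obtain u l where "u < l" "f u = \<tau>" "f l = \<tau>" by (auto simp: plateau_values_def)
    moreover obtain r where "u < ennreal (real_of_rat r)" "ennreal (real_of_rat r) < l"
      using ennreal_rat_dense[OF \<open>u < l\<close>] by blast
    \<comment> \<open>\<open>f\<close> is squeezed between its equal values at \<open>u\<close> and \<open>l\<close>\<close>
    ultimately have "f (ennreal (real_of_rat r)) = \<tau>"
      using assms unfolding monotone_def dir_le_def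
      by (cases up) (metis less_imp_le order_antisym)+
    then show "\<tau> \<in> f ` range (\<lambda>r. ennreal (real_of_rat r))" by blast
  qed
qed simp

lemma plateau_values_eq_empty_iff_inj:
  "plateau_values (f :: 'a::linorder \<Rightarrow> 'b) = {} \<longleftrightarrow> inj f"
  by (auto simp: plateau_values_def inj_def) (metis linorder_neq_iff)

lemma strictly_monotone_iff_inj:
  assumes "monotone (\<le>) (dir_le up) f"
  shows "strictly_monotone f \<longleftrightarrow> inj f"
proof
  assume "strictly_monotone f"
  then show "inj f"
    unfolding strictly_monotone_def by (metis injI linorder_cases order.strict_implies_not_eq strict_mono_eq)
next
  assume "inj f"
  have strict: "if up then f x < f y else f y < f x" if "x < y" for x y
    using assms \<open>inj f\<close> \<open>x < y\<close>
    by (auto simp: monotone_def dir_le_def order.strict_iff_order dest: injD)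
  show "strictly_monotone f"
    unfolding strictly_monotone_def strict_mono_def using strict by (cases up) auto
qed

theorem lemma2p5:
  fixes \<psi> \<phi> :: "ennreal \<Rightarrow> ennreal" and up :: bool
  assumes "sense_reversing_homeo \<psi>"
    and "if up then mono \<phi> else antimono \<phi>"
  shows "(\<forall>\<tau>. mono_inv (\<not> up) (\<psi> \<circ> \<phi>) \<tau> = mono_inv up \<phi> (mono_inv False \<psi> \<tau>))
       \<and> (\<forall>\<tau>. mono_inv (\<not> up) (\<phi> \<circ> \<psi>) \<tau> \<le> mono_inv False \<psi> (mono_inv up \<phi> \<tau>))
       \<and> countable {\<tau>. mono_inv (\<not> up) (\<phi> \<circ> \<psi>) \<tau> \<noteq> mono_inv False \<psi> (mono_inv up \<phi> \<tau>)}
       \<and> ((\<forall>\<tau>. mono_inv (\<not> up) (\<phi> \<circ> \<psi>) \<tau> = mono_inv False \<psi> (mono_inv up \<phi> \<tau>))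
            \<longleftrightarrow> strictly_monotone \<phi>)"
proof -
  have mono: "monotone (\<le>) (dir_le up) \<phi>"
    using assms(2) by (simp add: monotone_dir_le_iff)
  have exceptions:
    "{\<tau>. mono_inv (\<not> up) (\<phi> \<circ> \<psi>) \<tau> \<noteq> mono_inv False \<psi> (mono_inv up \<phi> \<tau>)} = plateau_values \<phi>"
    by (simp add: mono_inv_comp_sense_reversing_homeo_eq_iff[OF assms(1)]
        monotone_dir_le_gap_iff_plateau[OF mono])
  show ?thesis
    using mono_inv_sense_reversing_homeo_comp[OF assms(1)]
      mono_inv_comp_sense_reversing_homeo_le[OF assms(1)]
      countable_plateau_values[OF mono] strictly_monotone_iff_inj[OF mono]
    unfolding exceptions[symmetric] plateau_values_eq_empty_iff_inj[symmetric]
    by blast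
qed

end
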